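(* Let $f:\mathbb{N}\to[0,\infty)$ be a weakly super-multiplicative function which has a normal order $g:(0,\infty)\to(0,\infty)$ (so $g$ is strictly positive), where $g$ is either non-decreasing or $\log$-uniformly continuous. Then \[ \sup_{n\ge 2}\frac{\log f(n)}{\log n} \;=\; \lim\operatorname{ess}_{n}\frac{\log f(n)}{\log n}, \] i.e. the essential limit on the right exists (possibly equal to $\infty$) and equals the supremum on the left (with the convention $\log 0=-\infty$).
   Context: A function $f:\mathbb{N}\to[0,\infty)$ is weakly super-multiplicative if for all $n\in\mathbb{N}$ and all $\epsilon>0$ there exist $x_0>0$ and $\delta>0$ such that for all real $x>x_0$, $\#\{m\in\mathbb{N}\cap[x,(1+\epsilon)x]: f(nm)\ge(1-\epsilon)f(n)f(m)\}\ge\delta x$. A function $f:\mathbb{N}\to[0,\infty)$ has normal order $g$ if for every $\epsilon>0$ the set $\{n\in\mathbb{N}: |f(n)-g(n)|\ge\epsilon g(n)\}$ has upper (natural) density $0$. A function $g:(0,\infty)\to(0,\infty)$ is $\log$-uniformly continuous if for every $\epsilon>0$ there is $\delta>0$ such that for all $x,y>0$ with $|x/y-1|<\delta$ we have $|g(x)/g(y)-1|<\epsilon$. The essential limit of a sequence $(a_n)$ exists and equals $a\in\mathbb{R}$ if for every $\epsilon>0$ the set $\{n:|a_n-a|>\epsilon\}$ has natural density $0$; it equals $\infty$ if for every $M\in\mathbb{R}$ the set $\{n: a_n<M\}$ has natural density $0$. *)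

theory Defs
  imports "HOL-Analysis.Analysis"
begin

text \<open>Here \<open>\<nat>\<close> is read as the positive integers {1,2,...}; counting functions
  for densities are taken over {1..N}.\<close>

definition upper_density :: "nat set \<Rightarrow> ereal" where
  "upper_density A = limsup (\<lambda>N. ereal (real (card (A \<inter> {1..N})) / real N))"

definition has_natural_density :: "nat set \<Rightarrow> real \<Rightarrow> bool" where
  "has_natural_density A d \<longleftrightarrow>
     ((\<lambda>N. real (card (A \<inter> {1..N})) / real N) \<longlongrightarrow> d) sequentially"

definition weakly_super_multiplicative :: "(nat \<Rightarrow> real) \<Rightarrow> bool" where
  "weakly_super_multiplicative f \<longleftrightarrow>
     (\<forall>n\<ge>1. \<forall>\<epsilon>>0. \<exists>x0>0. \<exists>\<delta>>0. \<forall>x::real. x > x0 \<longrightarrow>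
        real (card {m::nat. m \<ge> 1 \<and> x \<le> real m \<and> real m \<le> (1 + \<epsilon>) * x \<and>
                             f (n * m) \<ge> (1 - \<epsilon>) * f n * f m}) \<ge> \<delta> * x)"

definition has_normal_order :: "(nat \<Rightarrow> real) \<Rightarrow> (real \<Rightarrow> real) \<Rightarrow> bool" where
  "has_normal_order f g \<longleftrightarrow>
     (\<forall>\<epsilon>>0. upper_density {n. n \<ge> 1 \<and> \<bar>f n - g (real n)\<bar> \<ge> \<epsilon> * g (real n)} = 0)"

definition log_uniformly_continuous :: "(real \<Rightarrow> real) \<Rightarrow> bool" where
  "log_uniformly_continuous g \<longleftrightarrow>
     (\<forall>\<epsilon>>0. \<exists>\<delta>>0. \<forall>x y. x > 0 \<longrightarrow> y > 0 \<longrightarrow> \<bar>x / y - 1\<bar> < \<delta> \<longrightarrow>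
        \<bar>g x / g y - 1\<bar> < \<epsilon>)"

definition has_ess_lim :: "(nat \<Rightarrow> ereal) \<Rightarrow> ereal \<Rightarrow> bool" where
  "has_ess_lim a L \<longleftrightarrow>
     (case L of
        ereal r \<Rightarrow> (\<forall>\<epsilon>>0. has_natural_density {n. \<bar>a n - ereal r\<bar> > ereal \<epsilon>} 0)
      | PInfty \<Rightarrow> (\<forall>M::real. has_natural_density {n. a n < ereal M} 0)
      | MInfty \<Rightarrow> False)"

text \<open>\<open>log f(n) / log n\<close> with the convention \<open>log 0 = -\<infinity>\<close> (meaningful for n \<ge> 2).\<close>
definition log_ratio :: "(nat \<Rightarrow> real) \<Rightarrow> nat \<Rightarrow> ereal" where
  "log_ratio f n = (if f n = 0 then -\<infinity> else ereal (ln (f n) / ln (real n)))"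

end

theory Submission
  imports Defs
begin

text \<open>Let \<open>s\<close> be the supremum and \<open>c < s\<close>; pick \<open>n\<^sub>0\<close> with \<open>f(n\<^sub>0) > n\<^sub>0\<^sup>c\<close>.
  Weak super-multiplicativity gives, near every large \<open>x\<close>, a positive proportion of \<open>m\<close> with
  \<open>f(n\<^sub>0 m) \<gtrsim> f(n\<^sub>0) f(m)\<close>; since \<open>f \<approx> g\<close> off a set of density zero, one such \<open>m\<close> has both
  \<open>m\<close> and \<open>n\<^sub>0 m\<close> non-exceptional, and the regularity of \<open>g\<close> turns this into
  \<open>g(q x) \<ge> D g(x)\<close> with \<open>q \<approx> n\<^sub>0\<close>, \<open>D \<approx> f(n\<^sub>0)\<close>, so \<open>\<beta> = log D / log q > c\<close>.
  Iterating this dilation inequality yields \<open>g(y) \<ge> C y\<^sup>\<beta>\<close>, hence \<open>f(n) > n\<^sup>c\<close> for every large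
  non-exceptional \<open>n\<close>. So \<open>log f(n) / log n \<ge> c\<close> off a set of density zero, while it is
  \<open>\<le> s\<close> for all \<open>n \<ge> 2\<close>.\<close>

lemma upper_density_zero_eventually_le:
  assumes "upper_density A = 0" "\<eta> > 0"
  shows "eventually (\<lambda>N. real (card (A \<inter> {1..N})) \<le> \<eta> * real N) sequentially"
proof -
  have "limsup (\<lambda>N. ereal (real (card (A \<inter> {1..N})) / real N)) < ereal \<eta>"
    using assms by (simp add: upper_density_def)
  from Limsup_lessD[OF this]
  have "eventually (\<lambda>N. real (card (A \<inter> {1..N})) / real N < \<eta>) sequentially"
    by simp
  then show ?thesis
    by eventually_elim (auto simp: divide_less_eq split: if_splits)
qed

lemma has_natural_density_zeroI:
  assumes "\<And>\<eta>. \<eta> > 0 \<Longrightarrow> eventually (\<lambda>N. real (card (A \<inter> {1..N})) \<le> \<eta> * real N) sequentially"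
  shows "has_natural_density A 0"
  unfolding has_natural_density_def
proof (rule order_tendstoI)
  fix a :: real assume "a < 0"
  then show "eventually (\<lambda>N. a < real (card (A \<inter> {1..N})) / real N) sequentially"
    by (intro always_eventually allI) (smt (verit) divide_nonneg_nonneg of_nat_0_le_iff)
next
  fix a :: real assume a: "0 < a"
  have "eventually (\<lambda>N. real (card (A \<inter> {1..N})) \<le> a/2 * real N \<and> N \<ge> 1) sequentially"
    using assms[of "a/2"] a eventually_ge_at_top by (auto intro: eventually_conj)
  then show "eventually (\<lambda>N. real (card (A \<inter> {1..N})) / real N < a) sequentially"
  proof eventually_elim
    case (elim N)
    then have "a/2 * real N < a * real N" using a by simp
    with elim show ?case by (simp add: divide_less_eq)
  qed
qed

lemma has_natural_density_zero_imp_upper_density: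
  assumes "has_natural_density A 0"
  shows "upper_density A = 0"
  using lim_imp_Limsup[OF trivial_limit_sequentially tendsto_ereal[OF assms[unfolded has_natural_density_def]]]
  by (simp add: upper_density_def zero_ereal_def)

lemma has_natural_density_zero_subset:
  assumes "upper_density B = 0" "A \<subseteq> {..<K} \<union> B"
  shows "has_natural_density A 0"
proof (rule has_natural_density_zeroI)
  fix \<eta> :: real assume \<eta>: "\<eta> > 0"
  obtain N1 :: nat where N1: "2 * real K / \<eta> \<le> real N1"
    using real_arch_simple by blast
  have "eventually (\<lambda>N. real K \<le> \<eta>/2 * real N) sequentially"
    unfolding eventually_sequentially
  proof (intro exI allI impI)
    fix N assume "N1 \<le> N"
    then have "2 * real K / \<eta> \<le> real N" using N1 by linarith
    then show "real K \<le> \<eta>/2 * real N" using \<eta> by (simp add: divide_le_eq algebra_simps)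
  qed
  then have "eventually (\<lambda>N. real (card (B \<inter> {1..N})) \<le> \<eta>/2 * real N \<and> real K \<le> \<eta>/2 * real N) sequentially"
    using upper_density_zero_eventually_le[OF assms(1), of "\<eta>/2"] \<eta> by (auto intro: eventually_conj)
  then show "eventually (\<lambda>N. real (card (A \<inter> {1..N})) \<le> \<eta> * real N) sequentially"
  proof eventually_elim
    case (elim N)
    have "card (A \<inter> {1..N}) \<le> card ({..<K} \<union> (B \<inter> {1..N}))"
      using assms(2) by (intro card_mono) auto
    also have "\<dots> \<le> K + card (B \<inter> {1..N})"
      using card_Un_le[of "{..<K}"] by simp
    finally show ?case using elim by linarith
  qed
qed

lemma upper_density_zero_imp_ex_notin:
  assumes "upper_density A = 0"
  shows "\<exists>n\<ge>k. n \<notin> A"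
proof (rule ccontr)
  assume all_in: "\<not> ?thesis"
  obtain N0 where N0: "\<forall>N\<ge>N0. real (card (A \<inter> {1..N})) \<le> 1/2 * real N"
    using upper_density_zero_eventually_le[OF assms, of "1/2"] by (auto simp: eventually_sequentially)
  define N where "N = max N0 (2 * k + 2)"
  have N: "N \<ge> 2 * k + 2" and le: "real (card (A \<inter> {1..N})) \<le> 1/2 * real N"
    using N0 by (auto simp: N_def)
  have "card {max k 1..N} \<le> card (A \<inter> {1..N})"
    using all_in by (intro card_mono) auto
  then show False using N le by auto
qed

lemma has_ess_lim_SUPI:
  fixes a :: "nat \<Rightarrow> ereal" and k :: nat
  defines "s \<equiv> SUP n\<in>{k..}. a n"
  assumes s_not_minf: "s \<noteq> -\<infinity>"
    and below: "\<And>c. ereal c < s \<Longrightarrow> has_natural_density {n. a n < ereal c} 0"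
  shows "has_ess_lim a s"
proof (cases s)
  case (real r)
  have "has_natural_density {n. \<bar>a n - ereal r\<bar> > ereal \<epsilon>} 0" if \<epsilon>: "\<epsilon> > 0" for \<epsilon>
  proof (rule has_natural_density_zero_subset)
    show "upper_density {n. a n < ereal (r - \<epsilon>)} = 0"
      using below[of "r - \<epsilon>"] \<epsilon> real by (simp add: has_natural_density_zero_imp_upper_density)
    show "{n. \<bar>a n - ereal r\<bar> > ereal \<epsilon>} \<subseteq> {..<k} \<union> {n. a n < ereal (r - \<epsilon>)}"
    proof (intro subsetI, elim CollectE)
      fix n assume far: "\<bar>a n - ereal r\<bar> > ereal \<epsilon>"
      show "n \<in> {..<k} \<union> {n. a n < ereal (r - \<epsilon>)}"
      proof (cases "n \<ge> k")
        case True
        then have "a n \<le> ereal r" using real SUP_upper[of n "{k..}" a] by (simp add: s_def)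
        with far show ?thesis by (cases "a n") auto
      qed auto
    qed
  qed
  then show ?thesis by (simp add: has_ess_lim_def real)
next
  case PInf
  then show ?thesis using below by (simp add: has_ess_lim_def)
qed (use s_not_minf in simp)

text \<open>Both regularity hypotheses on the normal order are only used through this property.\<close>

definition almost_mono :: "(real \<Rightarrow> real) \<Rightarrow> bool" where
  "almost_mono g \<longleftrightarrow>
     (\<forall>\<eta>>0. \<exists>\<theta>>0. \<forall>y' y. 0 < y' \<longrightarrow> y' \<le> y \<longrightarrow> y \<le> (1 + \<theta>) * y' \<longrightarrow> (1 - \<eta>) * g y' \<le> g y)"

lemma mono_on_imp_almost_mono:
  assumes g_pos: "\<forall>x>0. g x > 0" and mono: "mono_on {0<..} g"
  shows "almost_mono g"
  unfolding almost_mono_def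
proof (intro allI impI exI[of _ 1] conjI)
  fix \<eta> y' y :: real assume "\<eta> > 0" "0 < y'" "y' \<le> y"
  moreover from this have "g y' \<le> g y" "g y' > 0"
    using mono g_pos by (auto intro: mono_onD)
  ultimately show "(1 - \<eta>) * g y' \<le> g y"
    by (smt (verit) mult_le_cancel_right1)
qed simp

lemma log_uniformly_continuous_imp_almost_mono:
  assumes g_pos: "\<forall>x>0. g x > 0" and cont: "log_uniformly_continuous g"
  shows "almost_mono g"
  unfolding almost_mono_def
proof (intro allI impI)
  fix \<eta> :: real assume "\<eta> > 0"
  then obtain \<delta> where \<delta>: "\<delta> > 0" and
    close: "\<forall>x y. x > 0 \<longrightarrow> y > 0 \<longrightarrow> \<bar>x / y - 1\<bar> < \<delta> \<longrightarrow> \<bar>g x / g y - 1\<bar> < \<eta>"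
    using cont unfolding log_uniformly_continuous_def by blast
  show "\<exists>\<theta>>0. \<forall>y' y. 0 < y' \<longrightarrow> y' \<le> y \<longrightarrow> y \<le> (1 + \<theta>) * y' \<longrightarrow> (1 - \<eta>) * g y' \<le> g y"
  proof (intro exI[of _ "\<delta>/2"] conjI allI impI)
    fix y' y :: real assume y: "0 < y'" "y' \<le> y" "y \<le> (1 + \<delta>/2) * y'"
    then have "1 \<le> y / y'" "y / y' \<le> 1 + \<delta>/2" by (simp_all add: divide_le_eq)
    then have "\<bar>g y / g y' - 1\<bar> < \<eta>" using close y \<delta> by auto
    then have "1 - \<eta> < g y / g y'" by linarith
    moreover have "g y' > 0" using g_pos y by auto
    ultimately have "(1 - \<eta>) * g y' < g y" by (simp add: less_divide_eq)
    then show "(1 - \<eta>) * g y' \<le> g y" by linarith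
  qed (use \<delta> in simp)
qed

lemma almost_mono_bounded_below:
  assumes g_pos: "\<forall>x>0. g x > 0" and reg: "almost_mono g" and X: "X > 0"
  shows "\<exists>G0>0. \<forall>y. X \<le> y \<longrightarrow> y \<le> Y \<longrightarrow> G0 \<le> g y"
proof -
  obtain \<theta> where \<theta>: "\<theta> > 0" and
    step: "\<forall>y' y. 0 < y' \<longrightarrow> y' \<le> y \<longrightarrow> y \<le> (1 + \<theta>) * y' \<longrightarrow> (1 - 1/2) * g y' \<le> g y"
    using reg unfolding almost_mono_def by (meson half_gt_zero_iff zero_less_one)
  have gX: "g X > 0" using g_pos X by auto
  have bound: "\<forall>y. X \<le> y \<longrightarrow> y \<le> X * (1 + \<theta>)^j \<longrightarrow> g X / 2^j \<le> g y" for j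
  proof (induction j)
    case (Suc j)
    show ?case
    proof (intro allI impI)
      fix y assume y: "X \<le> y" "y \<le> X * (1 + \<theta>)^Suc j"
      show "g X / 2^Suc j \<le> g y"
      proof (cases "y \<le> X * (1 + \<theta>)^j")
        case True
        then have "g X / 2^j \<le> g y" using Suc y by blast
        moreover have "g X / 2^Suc j \<le> g X / 2^j" using gX by (simp add: divide_le_eq)
        ultimately show ?thesis by linarith
      next
        case False
        define y' where "y' = max X (y / (1 + \<theta>))"
        have "y = (1 + \<theta>) * (y / (1 + \<theta>))" using \<theta> by simp
        also have "\<dots> \<le> (1 + \<theta>) * y'" using \<theta> by (intro mult_left_mono) (auto simp: y'_def)
        finally have y_le: "y \<le> (1 + \<theta>) * y'" .
        have "1 \<le> (1 + \<theta>)^j" using \<theta> by simp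
        then have y': "X \<le> y'" "y' \<le> X * (1 + \<theta>)^j" "y' \<le> y"
          using y False \<theta> X by (auto simp: y'_def divide_le_eq mult_ac)
        then have "g X \<le> g y' * 2^j" using Suc by (simp add: divide_le_eq)
        also have "\<dots> \<le> (g y * 2) * 2^j"
          using step y' y_le X by (intro mult_right_mono) auto
        finally show ?thesis by (simp add: divide_le_eq mult_ac)
      qed
    qed
  qed simp
  obtain j where j: "Y / X < (1 + \<theta>)^j" using real_arch_pow[of "1 + \<theta>" "Y / X"] \<theta> by auto
  then have "Y \<le> X * (1 + \<theta>)^j" using X by (simp add: divide_less_eq mult.commute)
  then show ?thesis using bound[of j] gX by (intro exI[of _ "g X / 2^j"]) auto
qed

lemma dilation_lower_bound:
  fixes h :: "real \<Rightarrow> real"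
  assumes q: "q > 1" and X: "X > 0"
    and step: "\<forall>x\<ge>X. h x \<le> h (q * x)"
    and base: "\<forall>y. X \<le> y \<longrightarrow> y \<le> q * X \<longrightarrow> H0 \<le> h y"
  shows "\<forall>y\<ge>X. H0 \<le> h y"
proof -
  have bound: "\<forall>y. X \<le> y \<longrightarrow> y \<le> q^Suc k * X \<longrightarrow> H0 \<le> h y" for k
  proof (induction k)
    case (Suc k)
    show ?case
    proof (intro allI impI)
      fix y assume y: "X \<le> y" "y \<le> q^Suc (Suc k) * X"
      show "H0 \<le> h y"
      proof (cases "y \<le> q * X")
        case False
        then have "X \<le> y / q" "y / q \<le> q^Suc k * X"
          using y q by (simp_all add: le_divide_eq divide_le_eq mult_ac)
        then have "H0 \<le> h (q * (y / q))" using Suc step by force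
        then show ?thesis using q by simp
      qed (use base y in auto)
    qed
  qed (use base in simp)
  show ?thesis
  proof (intro allI impI)
    fix y assume y: "X \<le> y"
    obtain k where "y / X < q^k" using real_arch_pow[OF q] by auto
    then have "y < q^k * X" using X by (simp add: divide_less_eq)
    also have "\<dots> \<le> q^Suc k * X" using q X by simp
    finally have "y \<le> q^Suc k * X" by simp
    then show "H0 \<le> h y" using bound y by auto
  qed
qed

lemma card_multiples_in_le:
  fixes n0 N :: nat
  assumes "n0 \<ge> 1"
  shows "card {m \<in> {1..N}. n0 * m \<in> B} \<le> card (B \<inter> {1..n0 * N})"
proof (rule card_inj_on_le)
  show "inj_on ((*) n0) {m \<in> {1..N}. n0 * m \<in> B}" using assms by (intro inj_onI) simp
  show "(*) n0 ` {m \<in> {1..N}. n0 * m \<in> B} \<subseteq> B \<inter> {1..n0 * N}"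
    using assms by (auto simp: Suc_le_eq)
qed simp

text \<open>The multipliers produced by weak super-multiplicativity have positive lower density
  near every large \<open>x\<close>, so they cannot all be exceptional.\<close>

lemma exists_good_multiplier:
  assumes wsm: "weakly_super_multiplicative f" and B: "upper_density B = 0"
    and n0: "n0 \<ge> 1" and \<epsilon>: "\<epsilon> > 0"
  shows "\<exists>X. \<forall>x\<ge>X. \<exists>m. x \<le> real m \<and> real m \<le> (1 + \<epsilon>) * x \<and>
           (1 - \<epsilon>) * f n0 * f m \<le> f (n0 * m) \<and> m \<notin> B \<and> n0 * m \<notin> B"
proof -
  obtain x0 \<delta> where x0: "x0 > 0" and \<delta>: "\<delta> > 0" and
    many: "\<forall>x. x > x0 \<longrightarrow> \<delta> * x \<le> real (card {m. m \<ge> 1 \<and> x \<le> real m \<and> real m \<le> (1 + \<epsilon>) * x \<and>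
                                  (1 - \<epsilon>) * f n0 * f m \<le> f (n0 * m)})"
    using wsm[unfolded weakly_super_multiplicative_def, rule_format, OF n0 \<epsilon>] by auto
  define \<delta>' where "\<delta>' = \<delta> / (4 * (1 + \<epsilon>) * (1 + real n0))"
  have "4 * (1 + \<epsilon>) * (1 + real n0) > 0" using \<epsilon> by simp
  then have \<delta>': "\<delta>' > 0" and \<delta>'_eq: "\<delta>' * (1 + real n0) * (1 + \<epsilon>) = \<delta> / 4"
    using \<delta> by (simp_all add: \<delta>'_def field_simps)
  obtain N0 where N0: "\<forall>N\<ge>N0. real (card (B \<inter> {1..N})) \<le> \<delta>' * real N"
    using upper_density_zero_eventually_le[OF B \<delta>'] by (auto simp: eventually_sequentially)
  show ?thesis
  proof (intro exI[of _ "max (x0 + 1) (real N0)"] allI impI)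
    fix x assume x: "max (x0 + 1) (real N0) \<le> x"
    define S where "S = {m. m \<ge> 1 \<and> x \<le> real m \<and> real m \<le> (1 + \<epsilon>) * x \<and>
                          (1 - \<epsilon>) * f n0 * f m \<le> f (n0 * m)}"
    define N where "N = nat \<lfloor>(1 + \<epsilon>) * x\<rfloor>"
    have "x \<le> (1 + \<epsilon>) * x" using x x0 \<epsilon> by simp
    then have "real N0 \<le> (1 + \<epsilon>) * x" using x by linarith
    then have N: "N0 \<le> N" "N0 \<le> n0 * N" "real N \<le> (1 + \<epsilon>) * x"
      using n0 x x0 \<epsilon> by (auto simp: N_def le_nat_floor intro: order.trans[OF _ mult_le_mono1[of 1 n0]])
    show "\<exists>m. x \<le> real m \<and> real m \<le> (1 + \<epsilon>) * x \<and>
           (1 - \<epsilon>) * f n0 * f m \<le> f (n0 * m) \<and> m \<notin> B \<and> n0 * m \<notin> B"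
    proof (rule ccontr)
      assume none: "\<not> ?thesis"
      define E where "E = (B \<inter> {1..N}) \<union> {m \<in> {1..N}. n0 * m \<in> B}"
      have "S \<subseteq> E" using none by (auto simp: S_def E_def N_def intro: le_nat_floor)
      then have "card S \<le> card E" by (intro card_mono) (auto simp: E_def)
      also have "\<dots> \<le> card (B \<inter> {1..N}) + card (B \<inter> {1..n0 * N})"
        unfolding E_def using card_Un_le card_multiples_in_le[OF n0] by (meson add_left_mono order_trans)
      finally have "real (card S) \<le> \<delta>' * real N + \<delta>' * real (n0 * N)"
        using N0 N by (smt (verit) of_nat_add of_nat_mono)
      also have "\<dots> = \<delta>' * (1 + real n0) * real N" by (simp add: algebra_simps)
      also have "\<dots> \<le> \<delta>' * (1 + real n0) * ((1 + \<epsilon>) * x)" using N \<delta>' by (intro mult_left_mono) auto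
      also have "\<dots> = \<delta> / 4 * x" using \<delta>'_eq by (simp add: mult_ac)
      also have "\<dots> < \<delta> * x" using x x0 \<delta> by simp
      moreover have "\<delta> * x \<le> real (card S)" using many x by (simp add: S_def)
      ultimately show False by linarith
    qed
  qed
qed

lemma dilation_step:
  fixes f :: "nat \<Rightarrow> real" and g :: "real \<Rightarrow> real"
  assumes reg: "\<forall>y' y. 0 < y' \<longrightarrow> y' \<le> y \<longrightarrow> y \<le> (1 + \<theta>) * y' \<longrightarrow> (1 - \<eta>) * g y' \<le> g y"
    and \<eta>: "\<eta> < 1" and \<epsilon>: "0 < \<epsilon>" "\<epsilon> < 1" "\<epsilon> \<le> \<theta>"
    and n: "n \<ge> 1" "f n \<ge> 0"
    and x: "0 < x" "x \<le> real m" "real m \<le> (1 + \<epsilon>) * x"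
    and super: "(1 - \<epsilon>) * f n * f m \<le> f (n * m)"
    and near_m: "\<bar>f m - g (real m)\<bar> < \<epsilon> * g (real m)"
    and near_nm: "\<bar>f (n * m) - g (real (n * m))\<bar> < \<epsilon> * g (real (n * m))"
  shows "(1 - \<eta>)^2 * (1 - \<epsilon>)^2 / (1 + \<epsilon>) * f n * g x \<le> g (real n * (1 + \<epsilon>) * x)"
proof -
  have "(1 + \<epsilon>) * x \<le> (1 + \<theta>) * x" using \<epsilon> x by simp
  then have "real m \<le> (1 + \<theta>) * x" using x by linarith
  then have g_m: "(1 - \<eta>) * g x \<le> g (real m)" using reg x by blast
  have "real (n * m) \<le> real n * (1 + \<epsilon>) * x"
    using x n by (simp add: mult_left_mono mult.assoc)
  moreover have "real n * (1 + \<epsilon>) * x \<le> (1 + \<theta>) * real (n * m)"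
    using \<epsilon> x n by (simp add: mult_mono mult_left_mono mult_ac)
  moreover have "real (n * m) > 0" using n x by simp
  ultimately have g_nm: "(1 - \<eta>) * g (real (n * m)) \<le> g (real n * (1 + \<epsilon>) * x)"
    using reg by blast
  have "(1 - \<epsilon>)^2 * f n * g (real m) = (1 - \<epsilon>) * f n * ((1 - \<epsilon>) * g (real m))"
    by (simp add: power2_eq_square algebra_simps)
  also have "\<dots> \<le> (1 - \<epsilon>) * f n * f m"
  proof (rule mult_left_mono)
    show "(1 - \<epsilon>) * g (real m) \<le> f m" using near_m by (auto simp: abs_less_iff algebra_simps)
  qed (use \<epsilon> n in simp)
  also have "\<dots> \<le> (1 + \<epsilon>) * g (real (n * m))" using super near_nm by (auto simp: abs_less_iff algebra_simps)
  finally have f_n: "(1 - \<epsilon>)^2 / (1 + \<epsilon>) * f n * g (real m) \<le> g (real (n * m))"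
    using \<epsilon> by (simp add: divide_le_eq mult_ac)
  have "(1 - \<eta>)^2 * (1 - \<epsilon>)^2 / (1 + \<epsilon>) * f n * g x
      = (1 - \<eta>) * ((1 - \<epsilon>)^2 / (1 + \<epsilon>) * f n) * ((1 - \<eta>) * g x)"
    by (simp add: power2_eq_square algebra_simps)
  also have "\<dots> \<le> (1 - \<eta>) * ((1 - \<epsilon>)^2 / (1 + \<epsilon>) * f n) * g (real m)"
    using g_m \<eta> \<epsilon> n by (intro mult_left_mono) auto
  also have "\<dots> \<le> (1 - \<eta>) * g (real (n * m))"
    using mult_left_mono[OF f_n, of "1 - \<eta>"] \<eta> by (simp add: mult_ac)
  also have "\<dots> \<le> g (real n * (1 + \<epsilon>) * x)" by (rule g_nm)
  finally show ?thesis .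
qed

text \<open>Only \<open>\<eta>\<close> enters the hypothesis \<open>small\<close>: in the application \<open>\<epsilon>\<close> must also be below a
  threshold \<open>\<theta>\<close> that depends on \<open>\<eta>\<close>, so \<open>\<eta>\<close> is fixed first and \<open>\<epsilon> \<le> \<eta>\<close> is chosen afterwards.\<close>

lemma dilation_exponent_bound:
  assumes \<epsilon>\<eta>: "0 < \<epsilon>" "\<epsilon> \<le> \<eta>" "\<eta> < 1" and n0: "real n0 > 1" and f0: "f0 > 0"
    and small: "c * ln (real n0) - ln f0 < 4 * ln (1 - \<eta>) - (1 + \<bar>c\<bar>) * ln (1 + \<eta>)"
  shows "c < ln ((1 - \<eta>)^2 * (1 - \<epsilon>)^2 / (1 + \<epsilon>) * f0) / ln (real n0 * (1 + \<epsilon>))"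
proof -
  have ln_D: "ln ((1 - \<eta>)^2 * (1 - \<epsilon>)^2 / (1 + \<epsilon>) * f0)
      = 2 * ln (1 - \<eta>) + 2 * ln (1 - \<epsilon>) - ln (1 + \<epsilon>) + ln f0"
    using \<epsilon>\<eta> f0 by (simp add: ln_mult ln_div ln_realpow)
  have ln_q: "ln (real n0 * (1 + \<epsilon>)) = ln (real n0) + ln (1 + \<epsilon>)"
    using n0 \<epsilon>\<eta> by (simp add: ln_mult)
  have mono: "ln (1 - \<eta>) \<le> ln (1 - \<epsilon>)" "0 \<le> ln (1 + \<epsilon>)" "ln (1 + \<epsilon>) \<le> ln (1 + \<eta>)"
    using \<epsilon>\<eta> by auto
  have "c * ln (1 + \<epsilon>) \<le> \<bar>c\<bar> * ln (1 + \<epsilon>)" using mono by (intro mult_right_mono) auto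
  also have "\<dots> \<le> \<bar>c\<bar> * ln (1 + \<eta>)" using mono by (intro mult_left_mono) auto
  finally have "c * ln (real n0 * (1 + \<epsilon>)) < ln ((1 - \<eta>)^2 * (1 - \<epsilon>)^2 / (1 + \<epsilon>) * f0)"
    using small mono unfolding ln_D ln_q by (simp add: algebra_simps)
  moreover have "ln (real n0 * (1 + \<epsilon>)) > 0" using n0 \<epsilon>\<eta> by (simp add: ln_q add_pos_nonneg)
  ultimately show ?thesis by (simp add: less_divide_eq)
qed

lemma exists_small_log_error:
  fixes a c :: real
  assumes "a < 0"
  shows "\<exists>\<eta>. 0 < \<eta> \<and> \<eta> < 1 \<and> a < 4 * ln (1 - \<eta>) - (1 + \<bar>c\<bar>) * ln (1 + \<eta>)"
proof -
  have "((\<lambda>\<eta>. 4 * ln (1 - \<eta>) - (1 + \<bar>c\<bar>) * ln (1 + \<eta>)) \<longlongrightarrow> 0) (at_right 0)"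
    by (auto intro!: tendsto_eq_intros)
  from order_tendstoD(1)[OF this assms]
  obtain b where "b > 0" and small: "\<And>\<eta>. 0 < \<eta> \<Longrightarrow> \<eta> < b \<Longrightarrow> a < 4 * ln (1 - \<eta>) - (1 + \<bar>c\<bar>) * ln (1 + \<eta>)"
    unfolding eventually_at_right_field by auto
  then show ?thesis by (intro exI[of _ "min (b/2) (1/2)"]) auto
qed

lemma dilation_inequality:
  fixes f :: "nat \<Rightarrow> real" and g :: "real \<Rightarrow> real"
  assumes wsm: "weakly_super_multiplicative f" and normal: "has_normal_order f g"
    and reg: "almost_mono g"
    and n0: "n0 \<ge> 2" "f n0 > 0" and c: "c < ln (f n0) / ln (real n0)"
  shows "\<exists>q D X. 1 < q \<and> 0 < D \<and> 1 \<le> X \<and> c < ln D / ln q \<and> (\<forall>x\<ge>X. D * g x \<le> g (q * x))"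
proof -
  have "c * ln (real n0) - ln (f n0) < 0" using n0 c by (simp add: less_divide_eq)
  then obtain \<eta> where \<eta>: "0 < \<eta>" "\<eta> < 1"
    and small_\<eta>: "c * ln (real n0) - ln (f n0) < 4 * ln (1 - \<eta>) - (1 + \<bar>c\<bar>) * ln (1 + \<eta>)"
    using exists_small_log_error by blast
  obtain \<theta> where \<theta>: "\<theta> > 0" and
    step: "\<forall>y' y. 0 < y' \<longrightarrow> y' \<le> y \<longrightarrow> y \<le> (1 + \<theta>) * y' \<longrightarrow> (1 - \<eta>) * g y' \<le> g y"
    using reg \<eta> unfolding almost_mono_def by auto
  define \<epsilon> where "\<epsilon> = min \<eta> \<theta>"
  have \<epsilon>: "0 < \<epsilon>" "\<epsilon> \<le> \<eta>" "\<epsilon> \<le> \<theta>" "\<epsilon> < 1" using \<eta> \<theta> by (auto simp: \<epsilon>_def)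
  define B where "B = {n. n \<ge> 1 \<and> \<bar>f n - g (real n)\<bar> \<ge> \<epsilon> * g (real n)}"
  have "upper_density B = 0" using normal \<epsilon> unfolding has_normal_order_def B_def by auto
  then obtain X0 where good: "\<forall>x\<ge>X0. \<exists>m. x \<le> real m \<and> real m \<le> (1 + \<epsilon>) * x \<and>
           (1 - \<epsilon>) * f n0 * f m \<le> f (n0 * m) \<and> m \<notin> B \<and> n0 * m \<notin> B"
    using exists_good_multiplier[OF wsm _ _ \<epsilon>(1), of B n0] n0 by auto
  define q where "q = real n0 * (1 + \<epsilon>)"
  define D where "D = (1 - \<eta>)^2 * (1 - \<epsilon>)^2 / (1 + \<epsilon>) * f n0"
  show ?thesis
  proof (rule exI[of _ q], rule exI[of _ D], rule exI[of _ "max 1 X0"], intro conjI allI impI)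
    show "1 < q" unfolding q_def using n0 \<epsilon> by (intro less_1_mult) auto
    show "0 < D" using \<eta> \<epsilon> n0 by (simp add: D_def)
    show "c < ln D / ln q"
      unfolding D_def q_def using \<epsilon> \<eta> n0 small_\<eta> by (intro dilation_exponent_bound) auto
    fix x assume x: "max 1 X0 \<le> x"
    then obtain m where m: "x \<le> real m" "real m \<le> (1 + \<epsilon>) * x"
      "(1 - \<epsilon>) * f n0 * f m \<le> f (n0 * m)" "m \<notin> B" "n0 * m \<notin> B"
      using good by auto
    then have "m \<ge> 1" using x by linarith
    with m n0 have "\<bar>f m - g (real m)\<bar> < \<epsilon> * g (real m)"
      "\<bar>f (n0 * m) - g (real (n0 * m))\<bar> < \<epsilon> * g (real (n0 * m))"
      by (auto simp: B_def)
    with m x show "D * g x \<le> g (q * x)"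
      unfolding D_def q_def using dilation_step[OF step, where \<epsilon>=\<epsilon> and n=n0 and x=x and m=m] \<eta> \<epsilon> n0
      by (simp add: mult.assoc)
  qed simp
qed

lemma ln_lower_bound_of_dilation:
  fixes g :: "real \<Rightarrow> real"
  assumes g_pos: "\<forall>x>0. g x > 0" and reg: "almost_mono g"
    and q: "q > 1" and X: "X \<ge> 1" and D: "D > 0"
    and dil: "\<forall>x\<ge>X. D * g x \<le> g (q * x)"
  shows "\<exists>H0. \<forall>y\<ge>X. H0 + ln D / ln q * ln y \<le> ln (g y)"
proof -
  define \<beta> where "\<beta> = ln D / ln q"
  define h where "h y = ln (g y) - \<beta> * ln y" for y
  obtain G0 where G0: "G0 > 0" "\<forall>y. X \<le> y \<longrightarrow> y \<le> q * X \<longrightarrow> G0 \<le> g y"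
    using almost_mono_bounded_below[OF g_pos reg, of X "q * X"] X by auto
  have "h x \<le> h (q * x)" if x: "x \<ge> X" for x
  proof -
    have "g x > 0" "g (q * x) > 0" using g_pos x X q by auto
    then have "ln (D * g x) \<le> ln (g (q * x))" using dil x D by simp
    then have "ln D + ln (g x) \<le> ln (g (q * x))" using \<open>g x > 0\<close> D by (simp add: ln_mult)
    moreover have "\<beta> * ln (q * x) = ln D + \<beta> * ln x"
      using q x X by (simp add: \<beta>_def ln_mult distrib_left)
    ultimately show ?thesis by (simp add: h_def)
  qed
  moreover have "ln G0 - \<bar>\<beta>\<bar> * ln (q * X) \<le> h y" if y: "X \<le> y" "y \<le> q * X" for y
  proof -
    have "ln G0 \<le> ln (g y)" using G0 y X by auto
    moreover have "0 \<le> ln y" "ln y \<le> ln (q * X)" using y X by auto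
    then have "\<beta> * ln y \<le> \<bar>\<beta>\<bar> * ln (q * X)"
      by (meson abs_ge_self abs_ge_zero mult_mono order_trans)
    ultimately show ?thesis by (simp add: h_def)
  qed
  ultimately have "\<forall>y\<ge>X. ln G0 - \<bar>\<beta>\<bar> * ln (q * X) \<le> h y"
    using X q by (intro dilation_lower_bound) auto
  then have "\<forall>y\<ge>X. (ln G0 - \<bar>\<beta>\<bar> * ln (q * X)) + \<beta> * ln y \<le> ln (g y)"
    by (auto simp: h_def)
  then show ?thesis unfolding \<beta>_def by blast
qed

lemma log_ratio_ge_if_near:
  fixes f :: "nat \<Rightarrow> real" and g :: "real \<Rightarrow> real"
  assumes g_pos: "\<forall>x>0. g x > 0"
    and bound: "\<forall>y\<ge>X. H0 + \<beta> * ln y \<le> ln (g y)" and c: "c < \<beta>"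
  shows "\<exists>K. \<forall>n\<ge>K. \<bar>f n - g (real n)\<bar> < 1/2 * g (real n) \<longrightarrow> ereal c \<le> log_ratio f n"
proof -
  define t where "t = (ln 2 - H0) / (\<beta> - c)"
  obtain K :: nat where K: "real K \<ge> max X (exp t) + 2" using real_arch_simple by blast
  have "ereal c \<le> log_ratio f n" if n: "n \<ge> K" "\<bar>f n - g (real n)\<bar> < 1/2 * g (real n)" for n
  proof -
    have "real n \<ge> real K" using n by simp
    moreover have "X \<le> max X (exp t)" "exp t \<le> max X (exp t)" "0 < exp t" by auto
    ultimately have n_ge: "real n \<ge> X" "real n \<ge> exp t" "real n \<ge> 2" using K by linarith+
    have gn: "g (real n) > 0" using g_pos n_ge by auto
    have fn: "f n > g (real n) / 2" using n(2) abs_ge_minus_self[of "f n - g (real n)"] by linarith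
    have "ln (g (real n)) - ln 2 < ln (f n)"
      using fn gn ln_less_cancel_iff[of "g (real n) / 2" "f n"] by (simp add: ln_div)
    moreover have "H0 + \<beta> * ln (real n) \<le> ln (g (real n))" using bound n_ge by auto
    moreover have "t \<le> ln (real n)" using n_ge by (simp add: ln_ge_iff)
    then have "ln 2 - H0 \<le> (\<beta> - c) * ln (real n)" using c by (simp add: t_def divide_le_eq mult.commute)
    ultimately have "c * ln (real n) < ln (f n)" by (simp add: algebra_simps)
    moreover have "ln (real n) > 0" using n_ge by simp
    ultimately show ?thesis using fn gn by (simp add: log_ratio_def less_divide_eq less_imp_le)
  qed
  then show ?thesis by blast
qed

lemma log_ratio_below_sup_density_zero:
  fixes f :: "nat \<Rightarrow> real" and g :: "real \<Rightarrow> real"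
  assumes f_nonneg: "\<forall>n\<ge>1. f n \<ge> 0" and wsm: "weakly_super_multiplicative f"
    and g_pos: "\<forall>x>0. g x > 0" and normal: "has_normal_order f g" and reg: "almost_mono g"
    and c: "ereal c < (SUP n\<in>{2..}. log_ratio f n)"
  shows "has_natural_density {n. log_ratio f n < ereal c} 0"
proof -
  obtain n0 where n0: "n0 \<ge> 2" "ereal c < log_ratio f n0" using c by (auto simp: less_SUP_iff)
  then have "f n0 \<noteq> 0" by (auto simp: log_ratio_def)
  then have f_n0: "f n0 > 0" using f_nonneg n0 by (simp add: order_less_le)
  then have "c < ln (f n0) / ln (real n0)" using n0 by (simp add: log_ratio_def)
  then obtain q D X where q: "q > 1" and D: "D > 0" and X: "X \<ge> 1"
    and exponent: "c < ln D / ln q" and dil: "\<forall>x\<ge>X. D * g x \<le> g (q * x)"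
    using dilation_inequality[OF wsm normal reg n0(1) f_n0] by blast
  obtain H0 where "\<forall>y\<ge>X. H0 + ln D / ln q * ln y \<le> ln (g y)"
    using ln_lower_bound_of_dilation[OF g_pos reg q X D dil] by blast
  then obtain K where K: "\<forall>n\<ge>K. \<bar>f n - g (real n)\<bar> < 1/2 * g (real n) \<longrightarrow> ereal c \<le> log_ratio f n"
    using log_ratio_ge_if_near[OF g_pos _ exponent] by blast
  define B where "B = {n. n \<ge> 1 \<and> \<bar>f n - g (real n)\<bar> \<ge> 1/2 * g (real n)}"
  have "upper_density B = 0"
    using normal[unfolded has_normal_order_def, rule_format, of "1/2"] by (simp add: B_def)
  moreover have "{n. log_ratio f n < ereal c} \<subseteq> {..<max K 1} \<union> B"
  proof
    fix n assume "n \<in> {n. log_ratio f n < ereal c}"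
    then have "\<not> ereal c \<le> log_ratio f n" by auto
    then show "n \<in> {..<max K 1} \<union> B" using K by (cases "n \<ge> max K 1") (auto simp: B_def not_le)
  qed
  ultimately show ?thesis by (rule has_natural_density_zero_subset)
qed

theorem theorem1:
  fixes f :: "nat \<Rightarrow> real" and g :: "real \<Rightarrow> real"
  assumes f_nonneg: "\<forall>n\<ge>1. f n \<ge> 0"
    and wsm: "weakly_super_multiplicative f"
    and g_pos: "\<forall>x>0. g x > 0"
    and normal: "has_normal_order f g"
    and g_reg: "mono_on {0<..} g \<or> log_uniformly_continuous g"
  shows "has_ess_lim (log_ratio f) (SUP n\<in>{2..}. log_ratio f n)"
proof (rule has_ess_lim_SUPI)
  have reg: "almost_mono g"
    using g_reg mono_on_imp_almost_mono log_uniformly_continuous_imp_almost_mono g_pos by blast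
  then show "ereal c < (SUP n\<in>{2..}. log_ratio f n) \<Longrightarrow> has_natural_density {n. log_ratio f n < ereal c} 0"
    for c using log_ratio_below_sup_density_zero[OF f_nonneg wsm g_pos normal] by blast
  have "upper_density {n. n \<ge> 1 \<and> \<bar>f n - g (real n)\<bar> \<ge> 1/2 * g (real n)} = 0"
    using normal[unfolded has_normal_order_def, rule_format, of "1/2"] by simp
  then obtain n where n: "n \<ge> 2" "\<bar>f n - g (real n)\<bar> < 1/2 * g (real n)"
    using upper_density_zero_imp_ex_notin[of _ 2] by force
  then have "f n \<noteq> 0" using g_pos by auto
  then have "log_ratio f n \<noteq> -\<infinity>" by (simp add: log_ratio_def)
  moreover have "log_ratio f n \<le> (SUP n\<in>{2..}. log_ratio f n)" using n by (auto intro: SUP_upper)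
  ultimately show "(SUP n\<in>{2..}. log_ratio f n) \<noteq> -\<infinity>" by auto
qed

end
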